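(* Under the setup and conditions of the context, DDD-PCT and no anticipation, for every $j\in\mathcal E$ (including $j<0$) the population coefficient $\alpha_j$ of the regression $Y_{i,t}=\alpha_i+\delta_{S_i,t}+\eta_{Q_i,t}+\sum_{e\in\mathcal E}\alpha_eR_e(i,t)+\varepsilon_{i,t}$ satisfies $$\alpha_j=\sum_{g\in\mathcal G_{\mathrm{trg}}}\sum_{\ell=0}^{K}\omega^{j,\star}_{g,\ell}\,\mathrm{CATT}(g,\ell).$$
   Context: Setup: balanced panel of units $i$ over $t\in\{1,\dots,T\}$; treatment-enabling group $S_i\in\mathcal S\subseteq\{2,\dots,T\}\cup\{\infty\}$; time-invariant eligibility $Q_i\in\{0,1\}$; $\mathcal G_{\mathrm{trg}}=\mathcal S\setminus\{\infty\}$. Potential outcomes $Y_{i,t}(g)$, $g\in\mathcal G_{\mathrm{trg}}$, and $Y_{i,t}(\infty)$; observed $Y_{i,t}=Y_{i,t}(g)$ if $S_i=g\in\mathcal G_{\mathrm{trg}}$ and $Q_i=1$, else $Y_{i,t}=Y_{i,t}(\infty)$. Data i.i.d. with finite second moments. $\mathrm{CATT}(g,e)=\mathbb E[Y_{i,g+e}(g)-Y_{i,g+e}(\infty)\mid S_i=g,Q_i=1]$. $\mathcal E=\{-L,\dots,K\}\setminus\{-1\}$; the window covers all event times. $R_e(i,t)=\mathbb 1\{t-S_i=e\}Q_i$, $R_{g,\ell}(i,t)=\mathbb 1\{S_i=g,Q_i=1,t=g+\ell\}$; population least-squares coefficients over units and periods; the Gram matrix of the three-way demeaned (unit, group-by-time,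 eligibility-by-time) event-time indicators is nonsingular. $\omega^{j,\star}_{g,\ell}$: coefficient on $R_j$ in the population regression of $R_{g,\ell}$ on $\alpha_i,\delta_{S_i,t},\eta_{Q_i,t},\{R_e\}_{e\in\mathcal E}$. No anticipation: $Y_{i,t}(g)=Y_{i,t}(\infty)$ a.s. for all $g\in\mathcal G_{\mathrm{trg}}$, $t<g$. DDD-PCT: for all $g\in\mathcal G_{\mathrm{trg}}$, $g_c\in\mathcal S$ with $g_c>g$, $t\in\{2,\dots,T\}$ with $t\le g_c$: $\Delta_t(g,1)-\Delta_t(g,0)=\Delta_t(g_c,1)-\Delta_t(g_c,0)$, where $\Delta_t(s,q)=\mathbb E[Y_{i,t}(\infty)-Y_{i,t-1}(\infty)\mid S_i=s,Q_i=q]$. *)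

theory Defs
  imports "HOL-Probability.Probability" "HOL-Library.Extended_Nat"
begin

text \<open>A generic unit is modelled by a probability space M (data i.i.d. across units,
so population moments are expectations under M).
The enabling group S takes values in enat (infinity = never enabled), eligibility Q in {0,1}.
Potential outcomes: Yinf t = Y_t(infinity), Ypot g t = Y_t(g).\<close>

definition Gtrg :: "enat set \<Rightarrow> nat set" where
  "Gtrg SS = {g. enat g \<in> SS}"

definition event_window :: "nat \<Rightarrow> nat \<Rightarrow> int set" where
  "event_window L K = {- int L..int K} - {-1}"

definition Rev :: "('a \<Rightarrow> enat) \<Rightarrow> ('a \<Rightarrow> nat) \<Rightarrow> int \<Rightarrow> nat \<Rightarrow> 'a \<Rightarrow> real" where
  "Rev S Q e t w = (if (\<exists>g. S w = enat g \<and> int t - int g = e) \<and> Q w = 1 then 1 else 0)"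

definition Rgl :: "('a \<Rightarrow> enat) \<Rightarrow> ('a \<Rightarrow> nat) \<Rightarrow> nat \<Rightarrow> nat \<Rightarrow> nat \<Rightarrow> 'a \<Rightarrow> real" where
  "Rgl S Q g l t w = (if S w = enat g \<and> Q w = 1 \<and> t = g + l then 1 else 0)"

definition Yobs :: "('a \<Rightarrow> enat) \<Rightarrow> ('a \<Rightarrow> nat) \<Rightarrow> (nat \<Rightarrow> 'a \<Rightarrow> real) \<Rightarrow> (nat \<Rightarrow> nat \<Rightarrow> 'a \<Rightarrow> real)
    \<Rightarrow> nat \<Rightarrow> 'a \<Rightarrow> real" where
  "Yobs S Q Yinf Ypot t w =
     (case S w of enat g \<Rightarrow> (if Q w = 1 then Ypot g t w else Yinf t w) | \<infinity> \<Rightarrow> Yinf t w)"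

definition ls_obj :: "'a measure \<Rightarrow> nat \<Rightarrow> ('a \<Rightarrow> enat) \<Rightarrow> ('a \<Rightarrow> nat) \<Rightarrow> int set
    \<Rightarrow> (nat \<Rightarrow> 'a \<Rightarrow> real) \<Rightarrow> ('a \<Rightarrow> real) \<Rightarrow> (enat \<Rightarrow> nat \<Rightarrow> real) \<Rightarrow> (nat \<Rightarrow> nat \<Rightarrow> real)
    \<Rightarrow> (int \<Rightarrow> real) \<Rightarrow> real" where
  "ls_obj M T S Q E X a d h b =
     (\<integral>w. (\<Sum>t\<in>{1..T}. (X t w - a w - d (S w) t - h (Q w) t - (\<Sum>e\<in>E. b e * Rev S Q e t w))\<^sup>2) \<partial>M)"

definition unit_effect :: "'a measure \<Rightarrow> ('a \<Rightarrow> real) \<Rightarrow> bool" where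
  "unit_effect M a \<longleftrightarrow> a \<in> borel_measurable M \<and> integrable M (\<lambda>w. (a w)\<^sup>2)"

definition is_ls_min :: "'a measure \<Rightarrow> nat \<Rightarrow> ('a \<Rightarrow> enat) \<Rightarrow> ('a \<Rightarrow> nat) \<Rightarrow> int set
    \<Rightarrow> (nat \<Rightarrow> 'a \<Rightarrow> real) \<Rightarrow> ('a \<Rightarrow> real) \<Rightarrow> (enat \<Rightarrow> nat \<Rightarrow> real) \<Rightarrow> (nat \<Rightarrow> nat \<Rightarrow> real)
    \<Rightarrow> (int \<Rightarrow> real) \<Rightarrow> bool" where
  "is_ls_min M T S Q E X a d h b \<longleftrightarrow> unit_effect M a \<and>
     (\<forall>a' d' h' b'. unit_effect M a' \<longrightarrow> ls_obj M T S Q E X a d h b \<le> ls_obj M T S Q E X a' d' h' b')"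

definition pop_coef :: "'a measure \<Rightarrow> nat \<Rightarrow> ('a \<Rightarrow> enat) \<Rightarrow> ('a \<Rightarrow> nat) \<Rightarrow> int set
    \<Rightarrow> (nat \<Rightarrow> 'a \<Rightarrow> real) \<Rightarrow> int \<Rightarrow> real" where
  "pop_coef M T S Q E X = (SOME b. \<exists>a d h. is_ls_min M T S Q E X a d h b)"

definition omega_w :: "'a measure \<Rightarrow> nat \<Rightarrow> ('a \<Rightarrow> enat) \<Rightarrow> ('a \<Rightarrow> nat) \<Rightarrow> int set
    \<Rightarrow> int \<Rightarrow> nat \<Rightarrow> nat \<Rightarrow> real" where
  "omega_w M T S Q E j g l = pop_coef M T S Q E (Rgl S Q g l) j"

text \<open>Three-way (unit, group-by-time, eligibility-by-time) demeaning: residual of the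
population projection on the fixed effects only.\<close>
definition fe_resid :: "'a measure \<Rightarrow> nat \<Rightarrow> ('a \<Rightarrow> enat) \<Rightarrow> ('a \<Rightarrow> nat)
    \<Rightarrow> (nat \<Rightarrow> 'a \<Rightarrow> real) \<Rightarrow> nat \<Rightarrow> 'a \<Rightarrow> real" where
  "fe_resid M T S Q X =
     (let p = (SOME p. is_ls_min M T S Q {} X (fst p) (fst (snd p)) (snd (snd p)) (\<lambda>_. 0))
      in (\<lambda>t w. X t w - fst p w - fst (snd p) (S w) t - snd (snd p) (Q w) t))"

definition demeaned_gram :: "'a measure \<Rightarrow> nat \<Rightarrow> ('a \<Rightarrow> enat) \<Rightarrow> ('a \<Rightarrow> nat)
    \<Rightarrow> int \<Rightarrow> int \<Rightarrow> real" where
  "demeaned_gram M T S Q e e' =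
     (\<integral>w. (\<Sum>t\<in>{1..T}. fe_resid M T S Q (Rev S Q e) t w * fe_resid M T S Q (Rev S Q e') t w) \<partial>M)"

definition nonsingular_on :: "int set \<Rightarrow> (int \<Rightarrow> int \<Rightarrow> real) \<Rightarrow> bool" where
  "nonsingular_on E G \<longleftrightarrow>
     (\<forall>c. (\<forall>e\<in>E. (\<Sum>e'\<in>E. G e e' * c e') = 0) \<longrightarrow> (\<forall>e\<in>E. c e = 0))"

definition cond_mean :: "'a measure \<Rightarrow> 'a set \<Rightarrow> ('a \<Rightarrow> real) \<Rightarrow> real" where
  "cond_mean M A X = (\<integral>w. indicator A w * X w \<partial>M) / measure M A"

definition CATT :: "'a measure \<Rightarrow> ('a \<Rightarrow> enat) \<Rightarrow> ('a \<Rightarrow> nat) \<Rightarrow> (nat \<Rightarrow> 'a \<Rightarrow> real)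
    \<Rightarrow> (nat \<Rightarrow> nat \<Rightarrow> 'a \<Rightarrow> real) \<Rightarrow> nat \<Rightarrow> nat \<Rightarrow> real" where
  "CATT M S Q Yinf Ypot g e =
     cond_mean M {w \<in> space M. S w = enat g \<and> Q w = 1} (\<lambda>w. Ypot g (g + e) w - Yinf (g + e) w)"

definition Delta :: "'a measure \<Rightarrow> ('a \<Rightarrow> enat) \<Rightarrow> ('a \<Rightarrow> nat) \<Rightarrow> (nat \<Rightarrow> 'a \<Rightarrow> real)
    \<Rightarrow> nat \<Rightarrow> enat \<Rightarrow> nat \<Rightarrow> real" where
  "Delta M S Q Yinf t s q =
     cond_mean M {w \<in> space M. S w = s \<and> Q w = q} (\<lambda>w. Yinf t w - Yinf (t - 1) w)"

end

theory Submission
  imports Defs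
begin

(* Write Y = Y(inf) + sum_{g,l} R_{g,l} (Y(g) - Y(inf)).  In every (S, Q) cell and period, no
   anticipation and the event window make the cell mean of Y - Y(inf) equal to
   sum_{g,l} CATT(g,l) R_{g,l}, while DDD-PCT, with the never-treated group as comparison, makes
   the cell means of Y(inf) additive in (S, Q), (S, t) and (Q, t) terms.  Hence
   Y - sum_{g,l} CATT(g,l) R_{g,l} is a fixed-effects fit plus a residual with mean zero in every
   cell, and the within-unit demeaned residual is orthogonal to all regressors.  Population
   least-squares coefficients are linear in the outcome modulo such orthogonal terms, and they are
   unique because the demeaned Gram matrix is nonsingular; so alpha_j is the CATT-weighted sum of
   the coefficients omega^j_{g,l} of the R_{g,l}.  A never-treated group must exist, since otherwise
   sum_e (e + 1) R_e would itself be a fixed-effects fit. *)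

section \<open>Square integrability and conditional means\<close>

lemma unit_effect_mult_integrable:
  assumes "unit_effect M f" "unit_effect M g"
  shows "integrable M (\<lambda>w. f w * g w)"
proof (rule Bochner_Integration.integrable_bound)
  show "integrable M (\<lambda>w. (f w)\<^sup>2 + (g w)\<^sup>2)"
    using assms by (auto simp: unit_effect_def)
  show "(\<lambda>w. f w * g w) \<in> borel_measurable M"
    using assms by (auto simp: unit_effect_def)
  have "\<bar>x * y\<bar> \<le> x\<^sup>2 + y\<^sup>2" for x y :: real
  proof -
    have "2 * \<bar>x * y\<bar> \<le> x\<^sup>2 + y\<^sup>2"
      using sum_squares_bound[of "\<bar>x\<bar>" "\<bar>y\<bar>"] by (simp add: abs_mult mult.assoc)
    then show ?thesis
      using abs_ge_zero[of "x * y"] by linarith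
  qed
  then show "AE w in M. norm (f w * g w) \<le> norm ((f w)\<^sup>2 + (g w)\<^sup>2)"
    by simp
qed

lemma unit_effect_add:
  assumes "unit_effect M f" "unit_effect M g"
  shows "unit_effect M (\<lambda>w. f w + g w)"
proof -
  have "integrable M (\<lambda>w. (f w)\<^sup>2 + (g w)\<^sup>2 + 2 * (f w * g w))"
    using assms unit_effect_mult_integrable[OF assms] by (auto simp: unit_effect_def)
  then show ?thesis
    using assms by (auto simp: unit_effect_def power2_sum algebra_simps)
qed

lemma unit_effect_scale: "unit_effect M f \<Longrightarrow> unit_effect M (\<lambda>w. c * f w)"
  by (auto simp: unit_effect_def power_mult_distrib)

lemma unit_effect_diff: "unit_effect M f \<Longrightarrow> unit_effect M g \<Longrightarrow> unit_effect M (\<lambda>w. f w - g w)"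
  using unit_effect_add[of M f "\<lambda>w. (-1) * g w"] unit_effect_scale[of M g "-1"] by simp

lemma unit_effect_sum:
  "finite I \<Longrightarrow> (\<And>i. i \<in> I \<Longrightarrow> unit_effect M (f i)) \<Longrightarrow> unit_effect M (\<lambda>w. \<Sum>i\<in>I. f i w)"
proof (induction I rule: finite_induct)
  case empty
  then show ?case by (simp add: unit_effect_def)
next
  case (insert i I)
  then show ?case by (simp add: unit_effect_add)
qed

lemma unit_effect_cong:
  "(\<And>w. w \<in> space M \<Longrightarrow> f w = g w) \<Longrightarrow> unit_effect M f \<longleftrightarrow> unit_effect M g"
  unfolding unit_effect_def
  by (intro conj_cong measurable_cong Bochner_Integration.integrable_cong) auto

lemma unit_effect_bounded_mult:
  assumes f: "unit_effect M f" and c: "c \<in> borel_measurable M"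
    and bound: "\<And>w. w \<in> space M \<Longrightarrow> \<bar>c w\<bar> \<le> B"
  shows "unit_effect M (\<lambda>w. c w * f w)"
proof -
  have "integrable M (\<lambda>w. (c w * f w)\<^sup>2)"
  proof (rule Bochner_Integration.integrable_bound)
    show "integrable M (\<lambda>w. B\<^sup>2 * (f w)\<^sup>2)"
      using f by (simp add: unit_effect_def)
    show "(\<lambda>w. (c w * f w)\<^sup>2) \<in> borel_measurable M"
      using f c by (auto simp: unit_effect_def)
    have "(c w)\<^sup>2 \<le> B\<^sup>2" if "w \<in> space M" for w
      using power_mono[OF bound[OF that] abs_ge_zero, of 2] by simp
    then show "AE w in M. norm ((c w * f w)\<^sup>2) \<le> norm (B\<^sup>2 * (f w)\<^sup>2)"
      by (intro AE_I2) (simp add: power_mult_distrib mult_right_mono)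
  qed
  then show ?thesis
    using f c by (simp add: unit_effect_def borel_measurable_times)
qed

lemma (in finite_measure) unit_effect_bounded:
  assumes "f \<in> borel_measurable M" and "\<And>w. w \<in> space M \<Longrightarrow> \<bar>f w\<bar> \<le> B"
  shows "unit_effect M f"
  using unit_effect_bounded_mult[of M "\<lambda>_. 1" f B] assms by (simp add: unit_effect_def)

lemma cond_mean_cong:
  "(\<And>w. w \<in> A \<Longrightarrow> f w = g w) \<Longrightarrow> cond_mean M A f = cond_mean M A g"
  unfolding cond_mean_def by (intro arg_cong2[where f="(/)"] Bochner_Integration.integral_cong)
    (auto split: split_indicator)

lemma cond_mean_diff:
  assumes "A \<in> sets M" "integrable M f" "integrable M g"
  shows "cond_mean M A (\<lambda>w. f w - g w) = cond_mean M A f - cond_mean M A g"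
proof -
  have "(\<integral>w. indicator A w * (f w - g w) \<partial>M)
      = (\<integral>w. indicator A w * f w \<partial>M) - (\<integral>w. indicator A w * g w \<partial>M)"
    using integrable_mult_indicator[OF assms(1,2)] integrable_mult_indicator[OF assms(1,3)]
    by (simp add: right_diff_distrib)
  then show ?thesis
    unfolding cond_mean_def by (simp add: diff_divide_distrib)
qed

lemma cond_mean_eq_0_AE: "AE w in M. f w = 0 \<Longrightarrow> cond_mean M A f = 0"
  unfolding cond_mean_def by (subst integral_eq_zero_AE) (auto elim: AE_mp)

lemma increments_eq_imp_diff_eq:
  fixes f g :: "nat \<Rightarrow> 'b::ab_group_add"
  assumes "\<And>n. 1 \<le> n \<Longrightarrow> Suc n \<le> T \<Longrightarrow> f (Suc n) - f n = g (Suc n) - g n"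
    and "t \<in> {1..T}"
  shows "f t - f 1 = g t - g 1"
proof -
  have "1 \<le> t" "t \<le> T"
    using assms(2) by auto
  then show ?thesis
  proof (induction t rule: dec_induct)
    case (step n)
    have "f (Suc n) - f 1 = (f (Suc n) - f n) + (f n - f 1)"
      by simp
    also have "\<dots> = (g (Suc n) - g n) + (g n - g 1)"
      using step assms(1)[of n] by simp
    also have "\<dots> = g (Suc n) - g 1"
      by simp
    finally show ?case .
  qed simp
qed

section \<open>Least squares in the panel\<close>

locale ddd_panel = prob_space M for M :: "'a measure" +
  fixes T :: nat and SS :: "enat set" and S :: "'a \<Rightarrow> enat" and Q :: "'a \<Rightarrow> nat"
  assumes finite_SS: "finite SS"
    and S_measurable[measurable]: "S \<in> M \<rightarrow>\<^sub>M count_space UNIV"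
    and Q_measurable[measurable]: "Q \<in> M \<rightarrow>\<^sub>M count_space UNIV"
    and S_in_SS: "w \<in> space M \<Longrightarrow> S w \<in> SS"
    and Q_01: "w \<in> space M \<Longrightarrow> Q w \<in> {0, 1}"
begin

definition panel_L2 :: "(nat \<Rightarrow> 'a \<Rightarrow> real) \<Rightarrow> bool" where
  "panel_L2 X \<longleftrightarrow> (\<forall>t\<in>{1..T}. unit_effect M (X t))"

definition pinner :: "(nat \<Rightarrow> 'a \<Rightarrow> real) \<Rightarrow> (nat \<Rightarrow> 'a \<Rightarrow> real) \<Rightarrow> real" where
  "pinner X Y = (\<integral>w. (\<Sum>t\<in>{1..T}. X t w * Y t w) \<partial>M)"

definition fit :: "int set \<Rightarrow> ('a \<Rightarrow> real) \<Rightarrow> (enat \<Rightarrow> nat \<Rightarrow> real) \<Rightarrow> (nat \<Rightarrow> nat \<Rightarrow> real)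
    \<Rightarrow> (int \<Rightarrow> real) \<Rightarrow> nat \<Rightarrow> 'a \<Rightarrow> real" where
  "fit E a d h b t w = a w + d (S w) t + h (Q w) t + (\<Sum>e\<in>E. b e * Rev S Q e t w)"

definition orth_design :: "int set \<Rightarrow> (nat \<Rightarrow> 'a \<Rightarrow> real) \<Rightarrow> bool" where
  "orth_design E r \<longleftrightarrow> (\<forall>a d h b. unit_effect M a \<longrightarrow> pinner r (fit E a d h b) = 0)"

definition cell :: "enat \<Rightarrow> nat \<Rightarrow> 'a set" where
  "cell s q = {w \<in> space M. S w = s \<and> Q w = q}"

lemma cell_sets[measurable]: "cell s q \<in> sets M"
  unfolding cell_def by measurable

lemma cell_fun_bound:
  fixes f :: "enat \<Rightarrow> nat \<Rightarrow> real"
  assumes "w \<in> space M"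
  shows "\<bar>f (S w) (Q w)\<bar> \<le> (\<Sum>s\<in>SS. \<Sum>q\<in>{0, 1}. \<bar>f s q\<bar>)"
proof -
  have "\<bar>f (S w) (Q w)\<bar> \<le> (\<Sum>q\<in>{0, 1}. \<bar>f (S w) q\<bar>)"
    using Q_01[OF assms] by (intro member_le_sum) auto
  also have "\<dots> \<le> (\<Sum>s\<in>SS. \<Sum>q\<in>{0, 1}. \<bar>f s q\<bar>)"
    using S_in_SS[OF assms] finite_SS by (intro member_le_sum sum_nonneg) auto
  finally show ?thesis .
qed

lemma unit_effect_cell_fun: "unit_effect M (\<lambda>w. f (S w) (Q w))"
  by (rule unit_effect_bounded[OF _ cell_fun_bound]) measurable

lemma panel_L2_unit: "unit_effect M a \<Longrightarrow> panel_L2 (\<lambda>t w. a w)"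
  by (simp add: panel_L2_def)

lemma panel_L2_cell_fun: "panel_L2 (\<lambda>t w. f (S w) (Q w) t)"
  unfolding panel_L2_def by (blast intro: unit_effect_cell_fun[where f="\<lambda>s q. f s q t" for t])

lemma panel_L2_add: "panel_L2 X \<Longrightarrow> panel_L2 Y \<Longrightarrow> panel_L2 (\<lambda>t w. X t w + Y t w)"
  by (simp add: panel_L2_def unit_effect_add)

lemma panel_L2_scale: "panel_L2 X \<Longrightarrow> panel_L2 (\<lambda>t w. c * X t w)"
  by (simp add: panel_L2_def unit_effect_scale)

lemma panel_L2_diff: "panel_L2 X \<Longrightarrow> panel_L2 Y \<Longrightarrow> panel_L2 (\<lambda>t w. X t w - Y t w)"
  by (simp add: panel_L2_def unit_effect_diff)

lemma panel_L2_sum: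
  "finite I \<Longrightarrow> (\<And>i. i \<in> I \<Longrightarrow> panel_L2 (X i)) \<Longrightarrow> panel_L2 (\<lambda>t w. \<Sum>i\<in>I. X i t w)"
  by (simp add: panel_L2_def unit_effect_sum)

lemma panel_L2_cell_fun_mult:
  assumes X: "panel_L2 X"
  shows "panel_L2 (\<lambda>t w. f (S w) (Q w) * X t w)"
  unfolding panel_L2_def
proof
  fix t
  assume "t \<in> {1..T}"
  then have "unit_effect M (X t)"
    using X by (simp add: panel_L2_def)
  moreover have "(\<lambda>w. f (S w) (Q w)) \<in> borel_measurable M"
    by measurable
  ultimately show "unit_effect M (\<lambda>w. f (S w) (Q w) * X t w)"
    using cell_fun_bound by (rule unit_effect_bounded_mult)
qed

lemma panel_L2_cong:
  "(\<And>t w. t \<in> {1..T} \<Longrightarrow> w \<in> space M \<Longrightarrow> X t w = Y t w) \<Longrightarrow> panel_L2 X \<longleftrightarrow> panel_L2 Y"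
  unfolding panel_L2_def using unit_effect_cong by (metis (no_types, lifting))

lemma panel_L2_Rev: "panel_L2 (Rev S Q e)"
  using panel_L2_cell_fun[of "\<lambda>s q t. of_bool ((\<exists>g. s = enat g \<and> int t - int g = e) \<and> q = 1)"]
  by (simp add: Rev_def[abs_def] of_bool_def)

lemma panel_L2_Rgl: "panel_L2 (Rgl S Q g l)"
  using panel_L2_cell_fun[of "\<lambda>s q t. of_bool (s = enat g \<and> q = 1 \<and> t = g + l)"]
  by (simp add: Rgl_def[abs_def] of_bool_def)

lemma panel_L2_fit: "finite E \<Longrightarrow> unit_effect M a \<Longrightarrow> panel_L2 (fit E a d h b)"
  unfolding fit_def
  using panel_L2_cell_fun[of "\<lambda>s q t. d s t"] panel_L2_cell_fun[of "\<lambda>s q t. h q t"]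
  by (intro panel_L2_add panel_L2_unit panel_L2_sum panel_L2_scale panel_L2_Rev) auto

lemma pinner_commute: "pinner X Y = pinner Y X"
  unfolding pinner_def by (simp add: mult.commute)

lemma pinner_cong:
  assumes "\<And>t w. t \<in> {1..T} \<Longrightarrow> w \<in> space M \<Longrightarrow> X t w = X' t w"
    and "\<And>t w. t \<in> {1..T} \<Longrightarrow> w \<in> space M \<Longrightarrow> Y t w = Y' t w"
  shows "pinner X Y = pinner X' Y'"
  unfolding pinner_def using assms by (intro Bochner_Integration.integral_cong sum.cong) auto

lemma integrable_pinner:
  "panel_L2 X \<Longrightarrow> panel_L2 Y \<Longrightarrow> integrable M (\<lambda>w. \<Sum>t\<in>{1..T}. X t w * Y t w)"
  by (auto simp: panel_L2_def intro!: Bochner_Integration.integrable_sum unit_effect_mult_integrable)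

lemma pinner_add_left:
  assumes "panel_L2 X" "panel_L2 X'" "panel_L2 Y"
  shows "pinner (\<lambda>t w. X t w + X' t w) Y = pinner X Y + pinner X' Y"
  using integrable_pinner[OF assms(1,3)] integrable_pinner[OF assms(2,3)]
  by (simp add: pinner_def distrib_right sum.distrib)

lemma pinner_add_right:
  "panel_L2 X \<Longrightarrow> panel_L2 Y \<Longrightarrow> panel_L2 Y' \<Longrightarrow>
    pinner X (\<lambda>t w. Y t w + Y' t w) = pinner X Y + pinner X Y'"
  using pinner_add_left[of Y Y' X] by (simp add: pinner_commute)

lemma pinner_scale_left: "pinner (\<lambda>t w. c * X t w) Y = c * pinner X Y"
  unfolding pinner_def by (simp add: mult.assoc flip: sum_distrib_left)

lemma pinner_diff_left:
  assumes "panel_L2 X" "panel_L2 X'" "panel_L2 Y"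
  shows "pinner (\<lambda>t w. X t w - X' t w) Y = pinner X Y - pinner X' Y"
  using pinner_add_left[of X "\<lambda>t w. (-1) * X' t w" Y] pinner_scale_left[of "-1" X' Y]
    assms panel_L2_scale[of X' "-1"]
  by simp

lemma pinner_sum_left:
  assumes "finite I" "\<And>i. i \<in> I \<Longrightarrow> panel_L2 (X i)" "panel_L2 Y"
  shows "pinner (\<lambda>t w. \<Sum>i\<in>I. X i t w) Y = (\<Sum>i\<in>I. pinner (X i) Y)"
proof -
  have "pinner (\<lambda>t w. \<Sum>i\<in>I. X i t w) Y = (\<integral>w. (\<Sum>i\<in>I. \<Sum>t\<in>{1..T}. X i t w * Y t w) \<partial>M)"
    unfolding pinner_def by (simp add: sum_distrib_right sum.swap[of _ I])
  also have "\<dots> = (\<Sum>i\<in>I. pinner (X i) Y)"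
    unfolding pinner_def using assms integrable_pinner by (intro Bochner_Integration.integral_sum) auto
  finally show ?thesis .
qed

lemma pinner_lincomb_left:
  assumes "finite I" "\<And>i. i \<in> I \<Longrightarrow> panel_L2 (X i)" "panel_L2 Y"
  shows "pinner (\<lambda>t w. \<Sum>i\<in>I. c i * X i t w) Y = (\<Sum>i\<in>I. c i * pinner (X i) Y)"
  using assms by (simp add: pinner_sum_left panel_L2_scale pinner_scale_left)

lemma pinner_lincomb_right:
  "finite I \<Longrightarrow> (\<And>i. i \<in> I \<Longrightarrow> panel_L2 (X i)) \<Longrightarrow> panel_L2 Y \<Longrightarrow>
    pinner Y (\<lambda>t w. \<Sum>i\<in>I. c i * X i t w) = (\<Sum>i\<in>I. c i * pinner Y (X i))"
  using pinner_lincomb_left[of I X Y c] by (simp add: pinner_commute)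

lemma pinner_nonneg: "0 \<le> pinner X X"
  unfolding pinner_def by (simp add: sum_nonneg)

lemma pinner_null:
  assumes Z: "panel_L2 Z" and null: "pinner Z Z = 0" and Y: "panel_L2 Y"
  shows "pinner Z Y = 0"
proof -
  have "AE w in M. (\<Sum>t\<in>{1..T}. Z t w * Z t w) = 0"
    using null integrable_pinner[OF Z Z]
    by (simp add: pinner_def integral_nonneg_eq_0_iff_AE sum_nonneg)
  then have "AE w in M. (\<Sum>t\<in>{1..T}. Z t w * Y t w) = 0"
    by eventually_elim (simp add: sum_nonneg_eq_0_iff)
  then show ?thesis
    unfolding pinner_def by (rule integral_eq_zero_AE)
qed

lemma ls_obj_eq_pinner:
  "ls_obj M T S Q E X a d h b
    = pinner (\<lambda>t w. X t w - fit E a d h b t w) (\<lambda>t w. X t w - fit E a d h b t w)"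
  unfolding ls_obj_def pinner_def fit_def
  by (intro Bochner_Integration.integral_cong) (simp_all add: power2_eq_square diff_diff_eq)

lemma fit_diff:
  "fit E a d h b t w - fit E a' d' h' b' t w
    = fit E (\<lambda>w. a w - a' w) (\<lambda>s t. d s t - d' s t) (\<lambda>q t. h q t - h' q t) (\<lambda>e. b e - b' e) t w"
  unfolding fit_def by (simp add: left_diff_distrib flip: sum_subtractf)

lemma ls_obj_pythagoras:
  fixes d' :: "enat \<Rightarrow> nat \<Rightarrow> real" and h' :: "nat \<Rightarrow> nat \<Rightarrow> real" and b' :: "int \<Rightarrow> real"
  assumes E: "finite E" and X: "panel_L2 X" and a: "unit_effect M a"
    and orth: "orth_design E (\<lambda>t w. X t w - fit E a d h b t w)" and a': "unit_effect M a'"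
  defines "V \<equiv> fit E (\<lambda>w. a w - a' w) (\<lambda>s t. d s t - d' s t) (\<lambda>q t. h q t - h' q t) (\<lambda>e. b e - b' e)"
  shows "ls_obj M T S Q E X a' d' h' b' = ls_obj M T S Q E X a d h b + pinner V V"
proof -
  define r where "r = (\<lambda>t w. X t w - fit E a d h b t w)"
  have r: "panel_L2 r"
    unfolding r_def using X panel_L2_fit[OF E a] by (rule panel_L2_diff)
  have "unit_effect M (\<lambda>w. a w - a' w)"
    using a a' by (rule unit_effect_diff)
  then have V: "panel_L2 V" and rV: "pinner r V = 0"
    using E orth unfolding V_def r_def orth_design_def by (auto intro: panel_L2_fit)
  have "(\<lambda>t w. X t w - fit E a' d' h' b' t w) = (\<lambda>t w. r t w + V t w)"
    unfolding V_def r_def by (simp add: fun_eq_iff flip: fit_diff)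
  then have "ls_obj M T S Q E X a' d' h' b' = pinner (\<lambda>t w. r t w + V t w) (\<lambda>t w. r t w + V t w)"
    by (simp add: ls_obj_eq_pinner)
  also have "\<dots> = pinner r r + 2 * pinner r V + pinner V V"
    using pinner_add_left[OF r V panel_L2_add[OF r V]] pinner_add_right[OF r r V]
      pinner_add_right[OF V r V] pinner_commute[of V r]
    by simp
  finally show ?thesis
    using rV by (simp add: ls_obj_eq_pinner r_def)
qed

lemma is_ls_min_of_orth:
  assumes "finite E" "panel_L2 X" "unit_effect M a"
    and "orth_design E (\<lambda>t w. X t w - fit E a d h b t w)"
  shows "is_ls_min M T S Q E X a d h b"
  unfolding is_ls_min_def
proof (intro conjI allI impI)
  fix a' d' h' b'
  assume "unit_effect M a'"
  with ls_obj_pythagoras[OF assms this] show "ls_obj M T S Q E X a d h b \<le> ls_obj M T S Q E X a' d' h' b'"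
    using pinner_nonneg by simp
qed (fact assms(3))

lemma is_ls_min_fit_null:
  assumes "finite E" "panel_L2 X" "unit_effect M a"
    and "orth_design E (\<lambda>t w. X t w - fit E a d h b t w)"
    and min: "is_ls_min M T S Q E X a' d' h' b'"
  defines "V \<equiv> fit E (\<lambda>w. a w - a' w) (\<lambda>s t. d s t - d' s t) (\<lambda>q t. h q t - h' q t) (\<lambda>e. b e - b' e)"
  shows "pinner V V = 0"
proof -
  have "unit_effect M a'" and "ls_obj M T S Q E X a' d' h' b' \<le> ls_obj M T S Q E X a d h b"
    using min assms(3) by (auto simp: is_ls_min_def)
  with ls_obj_pythagoras[OF assms(1-4)] pinner_nonneg[of V] show ?thesis
    unfolding V_def by fastforce
qed

section \<open>Existence of orthogonal residuals\<close>

datatype regressor = Group_Time enat nat | Elig_Time nat nat | Event_Time int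

definition regressor_cell :: "regressor \<Rightarrow> enat \<Rightarrow> nat \<Rightarrow> nat \<Rightarrow> real" where
  "regressor_cell i s q t = (case i of
      Group_Time s' \<tau> \<Rightarrow> of_bool (s = s' \<and> t = \<tau>)
    | Elig_Time q' \<tau> \<Rightarrow> of_bool (q = q' \<and> t = \<tau>)
    | Event_Time e \<Rightarrow> of_bool ((\<exists>g. s = enat g \<and> int t - int g = e) \<and> q = 1))"

(* For a null u the coefficient is 0 (x / 0 = 0), and then pinner r u = 0 as well. *)
lemma pinner_sub_proj_self:
  assumes r: "panel_L2 r" and u: "panel_L2 u"
  shows "pinner (\<lambda>t w. r t w - pinner r u / pinner u u * u t w) u = 0"
proof -
  let ?c = "pinner r u / pinner u u"
  have "pinner (\<lambda>t w. r t w - ?c * u t w) u = pinner r u - ?c * pinner u u"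
    using pinner_diff_left[OF r panel_L2_scale[OF u, of ?c] u] by (simp only: pinner_scale_left)
  moreover have "pinner r u = 0" if "pinner u u = 0"
    using pinner_null[OF u that r] by (simp add: pinner_commute)
  ultimately show ?thesis
    by (cases "pinner u u = 0") simp_all
qed

lemma exists_orth_proj:
  assumes "finite I" "\<And>i. i \<in> I \<Longrightarrow> panel_L2 (G i)" "panel_L2 X"
  shows "\<exists>\<theta>. \<forall>j\<in>I. pinner (\<lambda>t w. X t w - (\<Sum>i\<in>I. \<theta> i * G i t w)) (G j) = 0"
  using assms
proof (induction I arbitrary: X rule: finite_induct)
  case empty
  then show ?case by simp
next
  case (insert n I)
  have G: "\<And>i. i \<in> I \<Longrightarrow> panel_L2 (G i)" and Gn: "panel_L2 (G n)"
    using insert.prems by auto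
  have span: "panel_L2 (\<lambda>t w. \<Sum>i\<in>I. c i * G i t w)" for c
    using insert.hyps(1) G by (intro panel_L2_sum panel_L2_scale)
  obtain \<theta> where \<theta>: "\<forall>j\<in>I. pinner (\<lambda>t w. X t w - (\<Sum>i\<in>I. \<theta> i * G i t w)) (G j) = 0"
    using insert.IH[OF G insert.prems(2)] by blast
  obtain \<phi> where \<phi>: "\<forall>j\<in>I. pinner (\<lambda>t w. G n t w - (\<Sum>i\<in>I. \<phi> i * G i t w)) (G j) = 0"
    using insert.IH[OF G Gn] by blast
  define r where "r = (\<lambda>t w. X t w - (\<Sum>i\<in>I. \<theta> i * G i t w))"
  define u where "u = (\<lambda>t w. G n t w - (\<Sum>i\<in>I. \<phi> i * G i t w))"
  define \<gamma> where "\<gamma> = pinner r u / pinner u u"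
  define \<theta>' where "\<theta>' = (\<lambda>i. if i = n then \<gamma> else \<theta> i - \<gamma> * \<phi> i)"
  have r: "panel_L2 r" and u: "panel_L2 u"
    unfolding r_def u_def using insert.prems(2) Gn span by (auto intro: panel_L2_diff)
  have resid: "X t w - (\<Sum>i\<in>insert n I. \<theta>' i * G i t w) = r t w - \<gamma> * u t w" for t w
  proof -
    have "(\<Sum>i\<in>insert n I. \<theta>' i * G i t w) = \<gamma> * G n t w + (\<Sum>i\<in>I. (\<theta> i - \<gamma> * \<phi> i) * G i t w)"
      using insert.hyps unfolding \<theta>'_def by (auto intro!: sum.cong)
    then show ?thesis
      unfolding r_def u_def
      by (simp add: left_diff_distrib right_diff_distrib sum_subtractf sum_distrib_left mult.assoc)
  qed
  have step: "pinner (\<lambda>t w. r t w - \<gamma> * u t w) Y = pinner r Y - \<gamma> * pinner u Y" if "panel_L2 Y" for Y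
    using pinner_diff_left[OF r panel_L2_scale[OF u] that] by (simp add: pinner_scale_left)
  have orth_u: "pinner (\<lambda>t w. r t w - \<gamma> * u t w) u = 0"
    unfolding \<gamma>_def by (rule pinner_sub_proj_self[OF r u])
  have orth_I: "pinner (\<lambda>t w. r t w - \<gamma> * u t w) (G j) = 0" if "j \<in> I" for j
    using step[OF G[OF that]] \<theta> \<phi> that by (simp add: r_def u_def)
  have "G n = (\<lambda>t w. u t w + (\<Sum>i\<in>I. \<phi> i * G i t w))"
    by (simp add: u_def)
  then have orth_n: "pinner (\<lambda>t w. r t w - \<gamma> * u t w) (G n) = 0"
    using pinner_add_right[OF panel_L2_diff[OF r panel_L2_scale[OF u]] u span]
      pinner_lincomb_right[OF insert.hyps(1) G panel_L2_diff[OF r panel_L2_scale[OF u]]]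
      orth_u orth_I
    by simp
  show ?case
    using orth_I orth_n by (intro exI[of _ \<theta>']) (simp add: resid)
qed

definition regressor_var :: "regressor \<Rightarrow> nat \<Rightarrow> 'a \<Rightarrow> real" where
  "regressor_var i t w = regressor_cell i (S w) (Q w) t"

definition regressors :: "int set \<Rightarrow> regressor set" where
  "regressors E = (\<lambda>(s, \<tau>). Group_Time s \<tau>) ` (SS \<times> {1..T})
     \<union> (\<lambda>(q, \<tau>). Elig_Time q \<tau>) ` ({0, 1} \<times> {1..T}) \<union> Event_Time ` E"

lemma finite_regressors: "finite E \<Longrightarrow> finite (regressors E)"
  unfolding regressors_def using finite_SS by simp

lemma panel_L2_regressor: "panel_L2 (regressor_var i)"
  unfolding regressor_var_def by (rule panel_L2_cell_fun)

lemma regressor_sum_eq_fit: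
  assumes E: "finite E" and w: "w \<in> space M" and t: "t \<in> {1..T}"
  shows "(\<Sum>i\<in>regressors E. \<theta> i * regressor_var i t w)
    = fit E (\<lambda>_. 0) (\<lambda>s \<tau>. \<theta> (Group_Time s \<tau>)) (\<lambda>q \<tau>. \<theta> (Elig_Time q \<tau>)) (\<lambda>e. \<theta> (Event_Time e)) t w"
  (is "?lhs = _")
proof -
  let ?GT = "(\<lambda>(s, \<tau>). Group_Time s \<tau>) ` (SS \<times> {1..T})"
  let ?ET = "(\<lambda>(q, \<tau>). Elig_Time q \<tau>) ` ({0::nat, 1} \<times> {1..T})"
  have fin: "finite ?GT" "finite ?ET" "finite (Event_Time ` E)"
    using finite_SS E by auto
  have "(\<Sum>i\<in>?GT. \<theta> i * regressor_var i t w) = (\<Sum>i\<in>?GT. if i = Group_Time (S w) t then \<theta> i else 0)"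
    by (intro sum.cong) (auto simp: regressor_var_def regressor_cell_def)
  also have "\<dots> = \<theta> (Group_Time (S w) t)"
    using fin S_in_SS[OF w] t by (simp add: sum.delta' image_iff)
  finally have GT: "(\<Sum>i\<in>?GT. \<theta> i * regressor_var i t w) = \<theta> (Group_Time (S w) t)" .
  have "(\<Sum>i\<in>?ET. \<theta> i * regressor_var i t w) = (\<Sum>i\<in>?ET. if i = Elig_Time (Q w) t then \<theta> i else 0)"
    by (intro sum.cong) (auto simp: regressor_var_def regressor_cell_def)
  also have "\<dots> = \<theta> (Elig_Time (Q w) t)"
    using fin Q_01[OF w] t by (simp add: sum.delta' image_iff)
  finally have ET: "(\<Sum>i\<in>?ET. \<theta> i * regressor_var i t w) = \<theta> (Elig_Time (Q w) t)" .
  have EV: "(\<Sum>i\<in>Event_Time ` E. \<theta> i * regressor_var i t w) = (\<Sum>e\<in>E. \<theta> (Event_Time e) * Rev S Q e t w)"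
    by (simp add: sum.reindex inj_on_def regressor_var_def regressor_cell_def Rev_def of_bool_def)
  have "?lhs = (\<Sum>i\<in>?GT. \<theta> i * regressor_var i t w) + (\<Sum>i\<in>?ET. \<theta> i * regressor_var i t w)
      + (\<Sum>i\<in>Event_Time ` E. \<theta> i * regressor_var i t w)"
  proof -
    have "?GT \<inter> ?ET = {}" "(?GT \<union> ?ET) \<inter> Event_Time ` E = {}"
      by auto
    then show ?thesis
      unfolding regressors_def using fin by (simp add: sum.union_disjoint)
  qed
  then show ?thesis
    unfolding GT ET EV fit_def by simp
qed

lemma orth_design_cong:
  "(\<And>t w. t \<in> {1..T} \<Longrightarrow> w \<in> space M \<Longrightarrow> r t w = r' t w) \<Longrightarrow> orth_design E r \<longleftrightarrow> orth_design E r'"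
  unfolding orth_design_def using pinner_cong[of r r'] by auto

definition time_mean :: "(nat \<Rightarrow> 'a \<Rightarrow> real) \<Rightarrow> 'a \<Rightarrow> real" where
  "time_mean X w = (\<Sum>t\<in>{1..T}. X t w) / real T"

definition demean :: "(nat \<Rightarrow> 'a \<Rightarrow> real) \<Rightarrow> nat \<Rightarrow> 'a \<Rightarrow> real" where
  "demean X t w = X t w - time_mean X w"

lemma unit_effect_time_mean:
  assumes "panel_L2 X"
  shows "unit_effect M (time_mean X)"
proof -
  have "unit_effect M (\<lambda>w. inverse (real T) * (\<Sum>t\<in>{1..T}. X t w))"
    using assms by (intro unit_effect_scale unit_effect_sum) (auto simp: panel_L2_def)
  then show ?thesis
    by (simp add: time_mean_def[abs_def] divide_inverse mult.commute)
qed

lemma panel_L2_demean: "panel_L2 X \<Longrightarrow> panel_L2 (demean X)"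
  unfolding demean_def[abs_def] by (intro panel_L2_diff panel_L2_unit unit_effect_time_mean)

lemma sum_demean: "(\<Sum>t\<in>{1..T}. demean X t w) = 0"
  by (cases "T = 0") (simp_all add: demean_def time_mean_def sum_subtractf)

lemma demean_lincomb:
  "demean (\<lambda>t w. X t w - (\<Sum>i\<in>I. \<theta> i * G i t w)) t w = demean X t w - (\<Sum>i\<in>I. \<theta> i * demean (G i) t w)"
proof -
  have "time_mean (\<lambda>t w. X t w - (\<Sum>i\<in>I. \<theta> i * G i t w)) w
      = time_mean X w - (\<Sum>i\<in>I. \<theta> i * time_mean (G i) w)"
    unfolding time_mean_def
    by (simp add: sum_subtractf sum_distrib_left sum_divide_distrib diff_divide_distrib
        flip: sum.swap[of _ I])
  then show ?thesis
    by (simp add: demean_def right_diff_distrib sum_subtractf)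
qed

lemma pinner_time_invariant: "(\<And>w. (\<Sum>t\<in>{1..T}. r t w) = 0) \<Longrightarrow> pinner r (\<lambda>t w. a w) = 0"
  unfolding pinner_def by (simp flip: sum_distrib_right)

lemma orth_design_of_regressors:
  assumes E: "finite E" and r: "panel_L2 r" and sum0: "\<And>w. (\<Sum>t\<in>{1..T}. r t w) = 0"
    and orth: "\<And>i. i \<in> regressors E \<Longrightarrow> pinner r (regressor_var i) = 0"
  shows "orth_design E r"
  unfolding orth_design_def
proof (intro allI impI)
  fix a d h b
  assume a: "unit_effect M a"
  have "pinner r (fit E a d h b)
      = pinner r (\<lambda>t w. a w + (\<Sum>i\<in>regressors E. case_regressor d h b i * regressor_var i t w))"
    using E by (intro pinner_cong) (simp_all add: regressor_sum_eq_fit fit_def)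
  also have "\<dots> = pinner r (\<lambda>t w. a w) + (\<Sum>i\<in>regressors E. case_regressor d h b i * pinner r (regressor_var i))"
    using E r a
    by (simp add: pinner_add_right pinner_lincomb_right panel_L2_unit panel_L2_regressor finite_regressors
        panel_L2_sum panel_L2_scale)
  also have "\<dots> = 0"
    using orth pinner_time_invariant[OF sum0] by simp
  finally show "pinner r (fit E a d h b) = 0" .
qed

lemma orth_design_demean_of_regressors:
  assumes E: "finite E" and Y: "panel_L2 Y"
    and orth: "\<And>j. j \<in> regressors E \<Longrightarrow> pinner (demean Y) (demean (regressor_var j)) = 0"
  shows "orth_design E (demean Y)"
proof (rule orth_design_of_regressors[OF E panel_L2_demean[OF Y] sum_demean])
  fix j
  assume j: "j \<in> regressors E"
  have "pinner (demean Y) (regressor_var j)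
      = pinner (demean Y) (\<lambda>t w. demean (regressor_var j) t w + time_mean (regressor_var j) w)"
    by (simp add: demean_def)
  also have "\<dots> = pinner (demean Y) (demean (regressor_var j))
      + pinner (demean Y) (\<lambda>t w. time_mean (regressor_var j) w)"
    by (intro pinner_add_right panel_L2_demean Y panel_L2_regressor panel_L2_unit unit_effect_time_mean)
  also have "\<dots> = 0"
    using orth[OF j] pinner_time_invariant[of "demean Y", OF sum_demean] by simp
  finally show "pinner (demean Y) (regressor_var j) = 0" .
qed

(* Unit effects span an infinite-dimensional space, so they are removed first: the time-demeaned
   outcome is projected on the time-demeaned regressors, and the time mean of the resulting
   residual becomes the unit effect. *)
lemma exists_orth_resid:
  assumes E: "finite E" and X: "panel_L2 X"
  obtains a d h b where "unit_effect M a" and "orth_design E (\<lambda>t w. X t w - fit E a d h b t w)"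
proof -
  let ?R = "regressors E"
  have "\<exists>\<theta>. \<forall>j\<in>?R.
      pinner (\<lambda>t w. demean X t w - (\<Sum>i\<in>?R. \<theta> i * demean (regressor_var i) t w)) (demean (regressor_var j)) = 0"
    by (rule exists_orth_proj[OF finite_regressors[OF E]]) (simp_all add: panel_L2_demean panel_L2_regressor X)
  then obtain \<theta> where \<theta>: "\<forall>j\<in>?R.
      pinner (\<lambda>t w. demean X t w - (\<Sum>i\<in>?R. \<theta> i * demean (regressor_var i) t w)) (demean (regressor_var j)) = 0"
    by blast
  define Y where "Y = (\<lambda>t w. X t w - (\<Sum>i\<in>?R. \<theta> i * regressor_var i t w))"
  have Y: "panel_L2 Y"
    unfolding Y_def using X E
    by (intro panel_L2_diff panel_L2_sum panel_L2_scale panel_L2_regressor finite_regressors)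
  have demean_Y: "demean Y = (\<lambda>t w. demean X t w - (\<Sum>i\<in>?R. \<theta> i * demean (regressor_var i) t w))"
    by (simp add: Y_def fun_eq_iff demean_lincomb)
  have orth_Y: "orth_design E (demean Y)"
    using \<theta> by (intro orth_design_demean_of_regressors[OF E Y]) (simp add: demean_Y)
  define d where "d = (\<lambda>s \<tau>. \<theta> (Group_Time s \<tau>))"
  define h where "h = (\<lambda>q \<tau>. \<theta> (Elig_Time q \<tau>))"
  define b where "b = (\<lambda>e. \<theta> (Event_Time e))"
  have "demean Y t w = X t w - fit E (time_mean Y) d h b t w"
    if "t \<in> {1..T}" "w \<in> space M" for t w
    using regressor_sum_eq_fit[OF E that(2,1), of \<theta>] by (simp add: demean_def Y_def fit_def d_def h_def b_def)
  then have "orth_design E (demean Y) \<longleftrightarrow> orth_design E (\<lambda>t w. X t w - fit E (time_mean Y) d h b t w)"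
    by (rule orth_design_cong)
  with orth_Y have "orth_design E (\<lambda>t w. X t w - fit E (time_mean Y) d h b t w)"
    by blast
  with that unit_effect_time_mean[OF Y] show thesis .
qed

section \<open>Identification of the event-time coefficients\<close>

lemma fit_lincomb:
  "fit E (\<lambda>w. \<Sum>p\<in>I. C p * A p w) (\<lambda>s t. \<Sum>p\<in>I. C p * D p s t) (\<lambda>q t. \<Sum>p\<in>I. C p * H p q t)
      (\<lambda>e. \<Sum>p\<in>I. C p * B p e) t w
    = (\<Sum>p\<in>I. C p * fit E (A p) (D p) (H p) (B p) t w)"
proof -
  have "(\<Sum>e\<in>E. (\<Sum>p\<in>I. C p * B p e) * Rev S Q e t w) = (\<Sum>p\<in>I. \<Sum>e\<in>E. C p * (B p e * Rev S Q e t w))"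
    by (simp add: sum_distrib_right mult.assoc sum.swap[of _ E])
  then show ?thesis
    by (simp add: fit_def sum.distrib distrib_left sum_distrib_left)
qed

definition fe_coef :: "(nat \<Rightarrow> 'a \<Rightarrow> real) \<Rightarrow> ('a \<Rightarrow> real) \<times> (enat \<Rightarrow> nat \<Rightarrow> real) \<times> (nat \<Rightarrow> nat \<Rightarrow> real)" where
  "fe_coef X = (SOME p. is_ls_min M T S Q {} X (fst p) (fst (snd p)) (snd (snd p)) (\<lambda>_. 0))"

lemma fe_resid_eq:
  "fe_resid M T S Q X
    = (\<lambda>t w. X t w - fit {} (fst (fe_coef X)) (fst (snd (fe_coef X))) (snd (snd (fe_coef X))) (\<lambda>_. 0) t w)"
  unfolding fe_resid_def fe_coef_def Let_def by (simp add: fit_def diff_diff_eq)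

lemma fe_coef_is_ls_min:
  assumes X: "panel_L2 X"
  shows "is_ls_min M T S Q {} X (fst (fe_coef X)) (fst (snd (fe_coef X))) (snd (snd (fe_coef X))) (\<lambda>_. 0)"
proof -
  obtain a d h b where a: "unit_effect M a" and "orth_design {} (\<lambda>t w. X t w - fit {} a d h b t w)"
    by (rule exists_orth_resid[OF finite.emptyI X])
  then have "orth_design {} (\<lambda>t w. X t w - fit {} a d h (\<lambda>_. 0) t w)"
    by (simp add: fit_def)
  then have "is_ls_min M T S Q {} X (fst (a, d, h)) (fst (snd (a, d, h))) (snd (snd (a, d, h))) (\<lambda>_. 0)"
    using X a by (simp add: is_ls_min_of_orth)
  then show ?thesis
    unfolding fe_coef_def by (rule someI)
qed

lemma orth_fe_resid:
  assumes X: "panel_L2 X"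
  shows "orth_design {} (fe_resid M T S Q X)"
proof -
  obtain a d h b where a: "unit_effect M a" and "orth_design {} (\<lambda>t w. X t w - fit {} a d h b t w)"
    by (rule exists_orth_resid[OF finite.emptyI X])
  then have orth: "orth_design {} (\<lambda>t w. X t w - fit {} a d h (\<lambda>_. 0) t w)"
    by (simp add: fit_def)
  obtain a' d' h' where coef: "fe_coef X = (a', d', h')"
    by (metis prod.exhaust)
  have min: "is_ls_min M T S Q {} X a' d' h' (\<lambda>_. 0)"
    using fe_coef_is_ls_min[OF X] by (simp add: coef)
  define r where "r = (\<lambda>t w. X t w - fit {} a d h (\<lambda>_. 0) t w)"
  define V where "V = fit {} (\<lambda>w. a w - a' w) (\<lambda>s t. d s t - d' s t) (\<lambda>q t. h q t - h' q t) (\<lambda>_. 0)"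
  have a': "unit_effect M a'"
    using min by (simp add: is_ls_min_def)
  have r: "panel_L2 r" and V: "panel_L2 V"
    unfolding r_def V_def using X a a' by (auto intro: panel_L2_diff panel_L2_fit unit_effect_diff)
  have V_null: "pinner V V = 0"
    using is_ls_min_fit_null[OF _ X a orth min] by (simp add: V_def)
  have resid: "fe_resid M T S Q X = (\<lambda>t w. r t w + V t w)"
    by (simp add: fe_resid_eq coef fun_eq_iff r_def V_def fit_def)
  show ?thesis
    unfolding orth_design_def resid
  proof (intro allI impI)
    fix a'' d'' h'' b''
    assume "unit_effect M a''"
    then show "pinner (\<lambda>t w. r t w + V t w) (fit {} a'' d'' h'' b'') = 0"
      using orth pinner_add_left[OF r V panel_L2_fit] pinner_null[OF V V_null panel_L2_fit]
      by (simp add: orth_design_def r_def)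
  qed
qed

lemma panel_L2_fe_resid: "panel_L2 X \<Longrightarrow> panel_L2 (fe_resid M T S Q X)"
  unfolding fe_resid_eq using fe_coef_is_ls_min
  by (intro panel_L2_diff panel_L2_fit) (auto simp: is_ls_min_def)

lemma sum_fe_resid_Rev:
  assumes E: "finite E"
  obtains a d h where "unit_effect M a"
    and "\<And>t w. (\<Sum>e\<in>E. c e * fe_resid M T S Q (Rev S Q e) t w)
      = (\<Sum>e\<in>E. c e * Rev S Q e t w) - fit {} a d h (\<lambda>_. 0) t w"
proof -
  define A where "A e = fst (fe_coef (Rev S Q e))" for e
  define D where "D e = fst (snd (fe_coef (Rev S Q e)))" for e
  define H where "H e = snd (snd (fe_coef (Rev S Q e)))" for e
  have "unit_effect M (A e)" for e
    using fe_coef_is_ls_min[OF panel_L2_Rev] by (simp add: A_def is_ls_min_def)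
  then have "unit_effect M (\<lambda>w. \<Sum>e\<in>E. c e * A e w)"
    using E by (intro unit_effect_sum unit_effect_scale)
  moreover have "(\<Sum>e\<in>E. c e * fe_resid M T S Q (Rev S Q e) t w)
      = (\<Sum>e\<in>E. c e * Rev S Q e t w) - fit {} (\<lambda>w. \<Sum>e\<in>E. c e * A e w)
          (\<lambda>s t. \<Sum>e\<in>E. c e * D e s t) (\<lambda>q t. \<Sum>e\<in>E. c e * H e q t) (\<lambda>_. 0) t w" for t w
    by (simp add: fit_lincomb[where B = "\<lambda>_ _. 0", simplified] fe_resid_eq A_def D_def H_def
        right_diff_distrib sum_subtractf)
  ultimately show thesis
    by (rule that)
qed

lemma demeaned_gram_kernel:
  assumes E: "finite E" and a: "unit_effect M a" and Z: "panel_L2 Z" and Z_null: "pinner Z Z = 0"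
    and comb: "\<And>t w. t \<in> {1..T} \<Longrightarrow> w \<in> space M \<Longrightarrow>
      (\<Sum>e\<in>E. c e * Rev S Q e t w) = fit {} a d h (\<lambda>_. 0) t w + Z t w"
    and e: "e \<in> E"
  shows "(\<Sum>e'\<in>E. demeaned_gram M T S Q e e' * c e') = 0"
proof -
  define R where "R e = fe_resid M T S Q (Rev S Q e)" for e
  have R: "panel_L2 (R e)" for e
    unfolding R_def by (rule panel_L2_fe_resid[OF panel_L2_Rev])
  obtain a0 d0 h0 where a0: "unit_effect M a0"
    and sum_R: "\<And>t w. (\<Sum>e'\<in>E. c e' * R e' t w) = (\<Sum>e'\<in>E. c e' * Rev S Q e' t w) - fit {} a0 d0 h0 (\<lambda>_. 0) t w"
    unfolding R_def by (rule sum_fe_resid_Rev[OF E, where c = c]) blast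
  define V where "V = fit {} (\<lambda>w. a w - a0 w) (\<lambda>s t. d s t - d0 s t) (\<lambda>q t. h q t - h0 q t) (\<lambda>_. 0)"
  have V: "unit_effect M (\<lambda>w. a w - a0 w)"
    using a a0 by (rule unit_effect_diff)
  have "pinner (R e) (\<lambda>t w. \<Sum>e'\<in>E. c e' * R e' t w) = pinner (R e) (\<lambda>t w. V t w + Z t w)"
    using comb by (intro pinner_cong) (simp_all add: sum_R V_def fit_def)
  also have "\<dots> = pinner (R e) V + pinner (R e) Z"
    unfolding V_def by (rule pinner_add_right[OF R panel_L2_fit[OF finite.emptyI V] Z])
  also have "\<dots> = 0"
    using orth_fe_resid[OF panel_L2_Rev, of e] V pinner_null[OF Z Z_null R, of e] pinner_commute[of "R e" Z]
    by (simp add: orth_design_def R_def V_def)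
  finally show ?thesis
    using pinner_lincomb_right[OF E R R, of e c]
    by (simp add: R_def demeaned_gram_def pinner_def mult.commute)
qed

lemma pop_coef_eqI:
  assumes E: "finite E" and gram: "nonsingular_on E (demeaned_gram M T S Q)"
    and X: "panel_L2 X" and a: "unit_effect M a"
    and orth: "orth_design E (\<lambda>t w. X t w - fit E a d h b t w)" and j: "j \<in> E"
  shows "pop_coef M T S Q E X j = b j"
proof -
  let ?b = "pop_coef M T S Q E X"
  have "\<exists>a d h. is_ls_min M T S Q E X a d h ?b"
    unfolding pop_coef_def
    by (rule someI_ex[where P = "\<lambda>b. \<exists>a d h. is_ls_min M T S Q E X a d h b"])
      (use is_ls_min_of_orth[OF E X a orth] in blast)
  then obtain a' d' h' where min: "is_ls_min M T S Q E X a' d' h' ?b"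
    by blast
  define V where "V = fit E (\<lambda>w. a w - a' w) (\<lambda>s t. d s t - d' s t) (\<lambda>q t. h q t - h' q t) (\<lambda>e. b e - ?b e)"
  have a': "unit_effect M a'"
    using min by (simp add: is_ls_min_def)
  have "\<forall>e\<in>E. (\<Sum>e'\<in>E. demeaned_gram M T S Q e e' * (b e' - ?b e')) = 0"
  proof
    fix e
    assume "e \<in> E"
    show "(\<Sum>e'\<in>E. demeaned_gram M T S Q e e' * (b e' - ?b e')) = 0"
    proof (rule demeaned_gram_kernel[OF E _ _ _ _ \<open>e \<in> E\<close>])
      show "unit_effect M (\<lambda>w. - (a w - a' w))"
        using unit_effect_scale[OF unit_effect_diff[OF a a'], of "-1"] by simp
      show "panel_L2 V"
        unfolding V_def using E a a' by (intro panel_L2_fit unit_effect_diff)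
      show "pinner V V = 0"
        unfolding V_def by (rule is_ls_min_fit_null[OF E X a orth min])
      show "(\<Sum>e\<in>E. (b e - ?b e) * Rev S Q e t w)
          = fit {} (\<lambda>w. - (a w - a' w)) (\<lambda>s t. - (d s t - d' s t)) (\<lambda>q t. - (h q t - h' q t)) (\<lambda>_. 0) t w + V t w"
        for t w
        by (simp add: V_def fit_def)
    qed
  qed
  with gram j show ?thesis
    unfolding nonsingular_on_def by auto
qed

lemma orth_design_add:
  "finite E \<Longrightarrow> panel_L2 r \<Longrightarrow> panel_L2 r' \<Longrightarrow> orth_design E r \<Longrightarrow> orth_design E r' \<Longrightarrow>
    orth_design E (\<lambda>t w. r t w + r' t w)"
  unfolding orth_design_def by (simp add: pinner_add_left panel_L2_fit)

lemma orth_design_lincomb: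
  "finite E \<Longrightarrow> finite I \<Longrightarrow> (\<And>i. i \<in> I \<Longrightarrow> panel_L2 (r i)) \<Longrightarrow> (\<And>i. i \<in> I \<Longrightarrow> orth_design E (r i)) \<Longrightarrow>
    orth_design E (\<lambda>t w. \<Sum>i\<in>I. c i * r i t w)"
  unfolding orth_design_def by (simp add: pinner_lincomb_left panel_L2_fit)

lemma orth_resid_lincomb:
  assumes E: "finite E" and I: "finite I" and X: "\<And>p. p \<in> I \<Longrightarrow> panel_L2 (X p)"
    and AB: "\<And>p. p \<in> I \<Longrightarrow>
      unit_effect M (A p) \<and> orth_design E (\<lambda>t w. X p t w - fit E (A p) (D p) (H p) (B p) t w)"
    and Z: "panel_L2 Z" and orth_Z: "orth_design E Z"
    and Y: "\<And>t w. t \<in> {1..T} \<Longrightarrow> w \<in> space M \<Longrightarrow>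
      Y t w = (\<Sum>p\<in>I. C p * X p t w) + a w + d (S w) t + h (Q w) t + Z t w"
  shows "orth_design E (\<lambda>t w. Y t w - fit E (\<lambda>w. a w + (\<Sum>p\<in>I. C p * A p w))
    (\<lambda>s t. d s t + (\<Sum>p\<in>I. C p * D p s t)) (\<lambda>q t. h q t + (\<Sum>p\<in>I. C p * H p q t))
    (\<lambda>e. \<Sum>p\<in>I. C p * B p e) t w)"
    (is "orth_design E (\<lambda>t w. Y t w - ?fit t w)")
proof -
  define r where "r p t w = X p t w - fit E (A p) (D p) (H p) (B p) t w" for p t w
  have r: "panel_L2 (r p)" and orth_r: "orth_design E (r p)" if "p \<in> I" for p
    unfolding r_def[abs_def] using E X AB that by (auto intro: panel_L2_diff panel_L2_fit)
  have "?fit t w = a w + d (S w) t + h (Q w) t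
      + fit E (\<lambda>w. \<Sum>p\<in>I. C p * A p w) (\<lambda>s t. \<Sum>p\<in>I. C p * D p s t) (\<lambda>q t. \<Sum>p\<in>I. C p * H p q t)
          (\<lambda>e. \<Sum>p\<in>I. C p * B p e) t w" for t w
    by (simp add: fit_def)
  then have "Y t w - ?fit t w = (\<Sum>p\<in>I. C p * r p t w) + Z t w"
    if "t \<in> {1..T}" "w \<in> space M" for t w
    using Y[OF that] by (simp add: fit_lincomb r_def right_diff_distrib sum_subtractf)
  then have "orth_design E (\<lambda>t w. Y t w - ?fit t w)
      \<longleftrightarrow> orth_design E (\<lambda>t w. (\<Sum>p\<in>I. C p * r p t w) + Z t w)"
    by (rule orth_design_cong)
  moreover have "orth_design E (\<lambda>t w. (\<Sum>p\<in>I. C p * r p t w) + Z t w)"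
    using I r by (intro orth_design_add[OF E _ Z _ orth_Z] orth_design_lincomb[OF E I r orth_r]
        panel_L2_sum panel_L2_scale)
  ultimately show ?thesis
    by blast
qed

lemma pop_coef_lincomb:
  assumes E: "finite E" and gram: "nonsingular_on E (demeaned_gram M T S Q)"
    and I: "finite I" and X: "\<And>p. p \<in> I \<Longrightarrow> panel_L2 (X p)"
    and a: "unit_effect M a" and Z: "panel_L2 Z" and orth_Z: "orth_design E Z"
    and Y: "\<And>t w. t \<in> {1..T} \<Longrightarrow> w \<in> space M \<Longrightarrow>
      Y t w = (\<Sum>p\<in>I. C p * X p t w) + a w + d (S w) t + h (Q w) t + Z t w"
    and j: "j \<in> E"
  shows "pop_coef M T S Q E Y j = (\<Sum>p\<in>I. C p * pop_coef M T S Q E (X p) j)"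
proof -
  have "\<exists>a d h b. unit_effect M a \<and> orth_design E (\<lambda>t w. X p t w - fit E a d h b t w)"
    if p: "p \<in> I" for p
  proof -
    obtain a d h b where "unit_effect M a" "orth_design E (\<lambda>t w. X p t w - fit E a d h b t w)"
      by (rule exists_orth_resid[OF E X[OF p]])
    then show ?thesis by blast
  qed
  then obtain A D H B where AB: "\<And>p. p \<in> I \<Longrightarrow>
      unit_effect M (A p) \<and> orth_design E (\<lambda>t w. X p t w - fit E (A p) (D p) (H p) (B p) t w)"
    by metis
  have coef: "pop_coef M T S Q E (X p) j = B p j" if "p \<in> I" for p
    using AB[OF that] by (intro pop_coef_eqI[OF E gram X[OF that] _ _ j]) auto
  have "panel_L2 (\<lambda>t w. (\<Sum>p\<in>I. C p * X p t w) + a w + d (S w) t + h (Q w) t + Z t w)"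
    using I X a Z panel_L2_cell_fun[of "\<lambda>s q t. d s t"] panel_L2_cell_fun[of "\<lambda>s q t. h q t"]
    by (intro panel_L2_add panel_L2_sum panel_L2_scale panel_L2_unit) auto
  moreover have "panel_L2 Y
      \<longleftrightarrow> panel_L2 (\<lambda>t w. (\<Sum>p\<in>I. C p * X p t w) + a w + d (S w) t + h (Q w) t + Z t w)"
    using Y by (rule panel_L2_cong)
  moreover have "unit_effect M (\<lambda>w. a w + (\<Sum>p\<in>I. C p * A p w))"
    using I a AB by (intro unit_effect_add unit_effect_sum unit_effect_scale) auto
  ultimately have "pop_coef M T S Q E Y j = (\<Sum>p\<in>I. C p * B p j)"
    using pop_coef_eqI[OF E gram _ _ orth_resid_lincomb[OF E I X AB Z orth_Z Y] j] by blast
  also have "\<dots> = (\<Sum>p\<in>I. C p * pop_coef M T S Q E (X p) j)"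
    using coef by simp
  finally show ?thesis .
qed

section \<open>Residuals with zero cell means\<close>

lemma integrable_panel_L2: "panel_L2 X \<Longrightarrow> t \<in> {1..T} \<Longrightarrow> integrable M (X t)"
  unfolding panel_L2_def unit_effect_def by (auto intro: square_integrable_imp_integrable)

lemma integrable_cell: "integrable M (f :: 'a \<Rightarrow> real) \<Longrightarrow> integrable M (\<lambda>w. indicator (cell s q) w * f w)"
  using integrable_mult_indicator[OF cell_sets, of f s q] by simp

lemma pinner_cell_fun_eq_0:
  assumes r: "panel_L2 r"
    and cell0: "\<And>s q t. s \<in> SS \<Longrightarrow> q \<in> {0, 1} \<Longrightarrow> t \<in> {1..T} \<Longrightarrow>
      (\<integral>w. indicator (cell s q) w * r t w \<partial>M) = 0"
  shows "pinner r (\<lambda>t w. f (S w) (Q w) t) = 0"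
proof -
  have split: "r t w * f (S w) (Q w) t = (\<Sum>s\<in>SS. \<Sum>q\<in>{0, 1}. f s q t * (indicator (cell s q) w * r t w))"
    if "w \<in> space M" for t w
  proof -
    have "(\<Sum>s\<in>SS. \<Sum>q\<in>{0, 1}. f s q t * (indicator (cell s q) w * r t w))
        = (\<Sum>s\<in>SS. if s = S w then \<Sum>q\<in>{0, 1}. if q = Q w then f s q t * r t w else 0 else 0)"
      using that by (intro sum.cong refl) (auto simp: cell_def split: split_indicator)
    also have "\<dots> = f (S w) (Q w) t * r t w"
      using S_in_SS[OF that] Q_01[OF that] finite_SS by (simp add: sum.delta')
    finally show ?thesis
      by simp
  qed
  have int: "integrable M (\<lambda>w. f s q t * (indicator (cell s q) w * r t w))" if "t \<in> {1..T}" for s q t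
    using integrable_cell[OF integrable_panel_L2[OF r that]] by simp
  have "pinner r (\<lambda>t w. f (S w) (Q w) t)
      = (\<integral>w. (\<Sum>t\<in>{1..T}. \<Sum>s\<in>SS. \<Sum>q\<in>{0, 1}. f s q t * (indicator (cell s q) w * r t w)) \<partial>M)"
    unfolding pinner_def by (intro Bochner_Integration.integral_cong) (simp_all add: split)
  also have "\<dots> = (\<Sum>t\<in>{1..T}. \<Sum>s\<in>SS. \<Sum>q\<in>{0, 1}. f s q t * (\<integral>w. indicator (cell s q) w * r t w \<partial>M))"
    using int by (simp add: Bochner_Integration.integral_sum Bochner_Integration.integrable_sum)
  also have "\<dots> = 0"
    using cell0 by (auto intro!: sum.neutral)
  finally show ?thesis .
qed

lemma orth_design_demean:
  assumes E: "finite E" and Z: "panel_L2 Z"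
    and cell0: "\<And>s q t. s \<in> SS \<Longrightarrow> q \<in> {0, 1} \<Longrightarrow> t \<in> {1..T} \<Longrightarrow>
      (\<integral>w. indicator (cell s q) w * Z t w \<partial>M) = 0"
  shows "orth_design E (demean Z)"
proof (rule orth_design_of_regressors[OF E panel_L2_demean[OF Z] sum_demean])
  have "(\<integral>w. indicator (cell s q) w * demean Z t w \<partial>M) = 0"
    if s: "s \<in> SS" and q: "q \<in> {0, 1}" and t: "t \<in> {1..T}" for s q t
  proof -
    have int: "integrable M (\<lambda>w. indicator (cell s q) w * Z \<tau> w)" if "\<tau> \<in> {1..T}" for \<tau>
      using integrable_cell[OF integrable_panel_L2[OF Z that]] .
    have "(\<integral>w. indicator (cell s q) w * demean Z t w \<partial>M)
        = (\<integral>w. indicator (cell s q) w * Z t w - (\<Sum>\<tau>\<in>{1..T}. indicator (cell s q) w * Z \<tau> w) / real T \<partial>M)"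
      by (simp add: demean_def time_mean_def right_diff_distrib sum_distrib_left)
    also have "\<dots> = (\<integral>w. indicator (cell s q) w * Z t w \<partial>M)
        - (\<integral>w. (\<Sum>\<tau>\<in>{1..T}. indicator (cell s q) w * Z \<tau> w) / real T \<partial>M)"
      using int t by (intro Bochner_Integration.integral_diff Bochner_Integration.integrable_divide
          Bochner_Integration.integrable_sum) auto
    also have "(\<integral>w. (\<Sum>\<tau>\<in>{1..T}. indicator (cell s q) w * Z \<tau> w) / real T \<partial>M)
        = (\<Sum>\<tau>\<in>{1..T}. \<integral>w. indicator (cell s q) w * Z \<tau> w \<partial>M) / real T"
      using int by (simp only: integral_divide_zero Bochner_Integration.integral_sum)
    finally show ?thesis
      using cell0 s q t by simp
  qed
  then show "pinner (demean Z) (regressor_var i) = 0" for i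
    unfolding regressor_var_def by (rule pinner_cell_fun_eq_0[OF panel_L2_demean[OF Z]])
qed

lemma integral_cell_diff_cell_fun:
  assumes "integrable M X"
  shows "(\<integral>w. indicator (cell s q) w * (X w - f (S w) (Q w)) \<partial>M)
    = (\<integral>w. indicator (cell s q) w * X w \<partial>M) - measure M (cell s q) * f s q"
proof -
  have "(\<integral>w. indicator (cell s q) w * (X w - f (S w) (Q w)) \<partial>M)
      = (\<integral>w. indicator (cell s q) w * X w - f s q * indicator (cell s q) w \<partial>M)"
    by (intro Bochner_Integration.integral_cong) (auto simp: cell_def split: split_indicator)
  also have "\<dots> = (\<integral>w. indicator (cell s q) w * X w \<partial>M) - (\<integral>w. f s q * indicator (cell s q) w \<partial>M)"
    using integrable_cell[OF assms] by (intro Bochner_Integration.integral_diff) (auto simp: emeasure_eq_measure)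
  also have "(\<integral>w. f s q * indicator (cell s q) w \<partial>M) = measure M (cell s q) * f s q"
    using sets.sets_into_space[OF cell_sets] by (simp add: Int_absorb2)
  finally show ?thesis .
qed

end

section \<open>The triple-difference model\<close>

locale ddd_model = ddd_panel M T SS S Q
  for M :: "'a measure" and T SS S Q +
  fixes L K :: nat and Yinf :: "nat \<Rightarrow> 'a \<Rightarrow> real" and Ypot :: "nat \<Rightarrow> nat \<Rightarrow> 'a \<Rightarrow> real"
  assumes SS_sub: "SS \<subseteq> enat ` {2..T} \<union> {\<infinity>}"
    and cells_pos: "\<And>s q. s \<in> SS \<Longrightarrow> q \<in> {0, 1} \<Longrightarrow> measure M (cell s q) > 0"
    and Yinf_L2: "panel_L2 Yinf"
    and Ypot_L2: "\<And>g. g \<in> Gtrg SS \<Longrightarrow> panel_L2 (Ypot g)"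
    and window: "\<And>g t. g \<in> Gtrg SS \<Longrightarrow> t \<in> {1..T} \<Longrightarrow> - int L \<le> int t - int g \<and> int t - int g \<le> int K"
    and gram: "nonsingular_on (event_window L K) (demeaned_gram M T S Q)"
    and no_antic: "\<And>g t. g \<in> Gtrg SS \<Longrightarrow> 1 \<le> t \<Longrightarrow> t < g \<Longrightarrow> AE w in M. Ypot g t w = Yinf t w"
    and ddd_pct: "\<And>g gc t. g \<in> Gtrg SS \<Longrightarrow> gc \<in> SS \<Longrightarrow> t \<in> {2..T} \<Longrightarrow> enat g < gc \<Longrightarrow> enat t \<le> gc \<Longrightarrow>
      Delta M S Q Yinf t (enat g) 1 - Delta M S Q Yinf t (enat g) 0
        = Delta M S Q Yinf t gc 1 - Delta M S Q Yinf t gc 0"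
begin

lemma finite_event_window: "finite (event_window L K)"
  by (simp add: event_window_def)

lemma finite_Gtrg: "finite (Gtrg SS)"
proof (rule finite_subset)
  show "Gtrg SS \<subseteq> {2..T}"
    using SS_sub by (auto simp: Gtrg_def)
qed simp

(* Without a never-treated group, sum_e (e + 1) R_e = Q (t - S + 1) is a fixed-effects fit, so
   the vector (e + 1)_e lies in the kernel of the demeaned Gram matrix. *)
lemma infinity_in_SS: "\<infinity> \<in> SS"
proof (rule ccontr)
  assume no_never_treated: "\<infinity> \<notin> SS"
  let ?E = "event_window L K"
  define c where "c e = real_of_int e + 1" for e
  have comb: "(\<Sum>e\<in>?E. c e * Rev S Q e t w)
      = fit {} (\<lambda>w. if Q w = 1 then - real (the_enat (S w)) else 0) (\<lambda>_ _. 0)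
          (\<lambda>q t. if q = 1 then real t + 1 else 0) (\<lambda>_. 0) t w + 0"
    if t: "t \<in> {1..T}" and w: "w \<in> space M" for t w
  proof -
    obtain g where g: "S w = enat g" "g \<in> Gtrg SS"
      using S_in_SS[OF w] no_never_treated by (cases "S w") (auto simp: Gtrg_def)
    show ?thesis
    proof (cases "Q w = 1")
      case True
      have "(\<Sum>e\<in>?E. c e * Rev S Q e t w) = (\<Sum>e\<in>?E. if e = int t - int g then c e else 0)"
        by (intro sum.cong) (auto simp: Rev_def g True)
      also have "\<dots> = real t + 1 - real g"
        using window[OF g(2) t] by (simp add: event_window_def c_def)
      finally show ?thesis
        by (simp add: fit_def g True)
    qed (simp add: Rev_def fit_def)
  qed
  have "(\<Sum>e'\<in>?E. demeaned_gram M T S Q e e' * c e') = 0" if "e \<in> ?E" for e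
  proof (rule demeaned_gram_kernel[OF finite_event_window _ _ _ comb that])
    show "unit_effect M (\<lambda>w. if Q w = 1 then - real (the_enat (S w)) else 0)"
      using unit_effect_cell_fun[of "\<lambda>s q. if q = 1 then - real (the_enat s) else 0"] by simp
    show "panel_L2 (\<lambda>t w. 0)" and "pinner (\<lambda>t w. 0) (\<lambda>t w. 0) = 0"
      by (simp_all add: panel_L2_def unit_effect_def pinner_def)
  qed
  with gram have "c 0 = 0"
    unfolding nonsingular_on_def by (auto simp: event_window_def)
  then show False
    by (simp add: c_def)
qed

(* DDD-PCT against the never-treated group makes the eligible-minus-ineligible gap of every group
   move in parallel with that of the never-treated group. *)
lemma Yinf_cell_means_additive:
  obtains k d0 h0 where "\<And>s q t. s \<in> SS \<Longrightarrow> q \<in> {0, 1} \<Longrightarrow> t \<in> {1..T} \<Longrightarrow>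
    cond_mean M (cell s q) (Yinf t) = k s q + d0 s t + h0 q t"
proof -
  define m where "m s q t = cond_mean M (cell s q) (Yinf t)" for s q t
  define df where "df s t = m s 1 t - m s 0 t" for s t
  have Delta_m: "Delta M S Q Yinf t s q = m s q t - m s q (t - 1)" if "t \<in> {2..T}" for t s q
    unfolding Delta_def m_def cell_def[symmetric] using that
    by (intro cond_mean_diff cell_sets integrable_panel_L2[OF Yinf_L2]) auto
  have parallel: "df s t - df s 1 = df \<infinity> t - df \<infinity> 1" if s: "s \<in> SS" and t: "t \<in> {1..T}" for s t
  proof (cases s)
    case (enat g)
    then have g: "g \<in> Gtrg SS"
      using s by (simp add: Gtrg_def)
    show ?thesis
    proof (rule increments_eq_imp_diff_eq[OF _ t])
      fix n
      assume "1 \<le> n" "Suc n \<le> T"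
      then have n: "Suc n \<in> {2..T}"
        by simp
      show "df s (Suc n) - df s n = df \<infinity> (Suc n) - df \<infinity> n"
        using ddd_pct[OF g infinity_in_SS n] by (simp add: Delta_m[OF n] df_def enat)
    qed
  qed simp
  show thesis
  proof (rule that)
    fix s and q :: nat and t
    assume s: "s \<in> SS" and q: "q \<in> {0, 1}" and t: "t \<in> {1..T}"
    then show "cond_mean M (cell s q) (Yinf t)
        = (if q = 1 then df s 1 else 0) + m s 0 t + (if q = 1 then df \<infinity> t - df \<infinity> 1 else 0)"
      using parallel[OF s t] by (auto simp: m_def df_def)
  qed
qed

definition att_cell :: "enat \<Rightarrow> nat \<Rightarrow> nat \<Rightarrow> real" where
  "att_cell s q t = (\<Sum>p\<in>Gtrg SS \<times> {0..K}.
     CATT M S Q Yinf Ypot (fst p) (snd p) * of_bool (s = enat (fst p) \<and> q = 1 \<and> t = fst p + snd p))"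

lemma sum_CATT_Rgl:
  "(\<Sum>p\<in>Gtrg SS \<times> {0..K}. CATT M S Q Yinf Ypot (fst p) (snd p) * Rgl S Q (fst p) (snd p) t w)
    = att_cell (S w) (Q w) t"
  unfolding att_cell_def Rgl_def by (simp add: of_bool_def)

lemma att_cell_treated:
  assumes g: "g \<in> Gtrg SS" and t: "t \<in> {1..T}" and "g \<le> t"
  shows "att_cell (enat g) 1 t = CATT M S Q Yinf Ypot g (t - g)"
proof -
  have "att_cell (enat g) 1 t
      = (\<Sum>p\<in>Gtrg SS \<times> {0..K}. if p = (g, t - g) then CATT M S Q Yinf Ypot (fst p) (snd p) else 0)"
    unfolding att_cell_def using \<open>g \<le> t\<close> by (intro sum.cong) auto
  also have "\<dots> = CATT M S Q Yinf Ypot g (t - g)"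
  proof -
    have "int (t - g) \<le> int K"
      using window[OF g t] \<open>g \<le> t\<close> by (simp add: of_nat_diff)
    then show ?thesis
      using g finite_Gtrg by (simp add: sum.delta')
  qed
  finally show ?thesis .
qed

lemma att_cell_eq_0: "\<not> (\<exists>g. s = enat g \<and> q = 1 \<and> g \<le> t) \<Longrightarrow> att_cell s q t = 0"
  unfolding att_cell_def by (auto intro!: sum.neutral)

lemma Yobs_cell_mean:
  assumes s: "s \<in> SS" and q: "q \<in> {0, 1}" and t: "t \<in> {1..T}"
  shows "cond_mean M (cell s q) (Yobs S Q Yinf Ypot t) = cond_mean M (cell s q) (Yinf t) + att_cell s q t"
proof (cases "\<exists>g. s = enat g \<and> q = 1")
  case True
  then obtain g where sg: "s = enat g" and q1: "q = 1"
    by blast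
  have g: "g \<in> Gtrg SS"
    using s sg by (simp add: Gtrg_def)
  have "cond_mean M (cell s q) (Yobs S Q Yinf Ypot t) = cond_mean M (cell s q) (Ypot g t)"
    by (rule cond_mean_cong) (simp add: cell_def Yobs_def sg q1)
  also have "\<dots> = cond_mean M (cell s q) (Yinf t) + cond_mean M (cell s q) (\<lambda>w. Ypot g t w - Yinf t w)"
    using cond_mean_diff[OF cell_sets integrable_panel_L2[OF Ypot_L2[OF g] t] integrable_panel_L2[OF Yinf_L2 t]]
    by simp
  also have "cond_mean M (cell s q) (\<lambda>w. Ypot g t w - Yinf t w) = att_cell s q t"
  proof (cases "g \<le> t")
    case True
    then show ?thesis
      using att_cell_treated[OF g t True] by (simp add: CATT_def cell_def sg q1)
  next
    case False
    have "AE w in M. Ypot g t w - Yinf t w = 0"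
      using no_antic[OF g] t False by auto
    then have "cond_mean M (cell s q) (\<lambda>w. Ypot g t w - Yinf t w) = 0"
      by (rule cond_mean_eq_0_AE)
    moreover have "att_cell s q t = 0"
      using False by (intro att_cell_eq_0) (simp add: sg)
    ultimately show ?thesis
      by simp
  qed
  finally show ?thesis .
next
  case False
  then have "cond_mean M (cell s q) (Yobs S Q Yinf Ypot t) = cond_mean M (cell s q) (Yinf t)"
    by (intro cond_mean_cong) (auto simp: cell_def Yobs_def split: enat.split)
  moreover have "att_cell s q t = 0"
    using False by (intro att_cell_eq_0) blast
  ultimately show ?thesis
    by simp
qed

lemma panel_L2_Yobs: "panel_L2 (Yobs S Q Yinf Ypot)"
proof -
  have "Yobs S Q Yinf Ypot t w
      = Yinf t w + (\<Sum>g\<in>Gtrg SS. of_bool (S w = enat g \<and> Q w = 1) * (Ypot g t w - Yinf t w))"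
    if "t \<in> {1..T}" and w: "w \<in> space M" for t w
  proof (cases "S w")
    case (enat g)
    then have "g \<in> Gtrg SS"
      using S_in_SS[OF w] by (simp add: Gtrg_def)
    with enat show ?thesis
      using finite_Gtrg by (simp add: Yobs_def of_bool_def if_distrib[of "\<lambda>x. x * _"] sum.delta cong: if_cong)
  qed (simp add: Yobs_def)
  then have "panel_L2 (Yobs S Q Yinf Ypot)
      \<longleftrightarrow> panel_L2 (\<lambda>t w. Yinf t w + (\<Sum>g\<in>Gtrg SS. of_bool (S w = enat g \<and> Q w = 1) * (Ypot g t w - Yinf t w)))"
    by (rule panel_L2_cong)
  moreover have "panel_L2 (\<lambda>t w. Yinf t w + (\<Sum>g\<in>Gtrg SS. of_bool (S w = enat g \<and> Q w = 1) * (Ypot g t w - Yinf t w)))"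
    by (intro panel_L2_add panel_L2_sum panel_L2_cell_fun_mult[where f = "\<lambda>s q. of_bool (s = enat g \<and> q = 1)" for g]
        panel_L2_diff Yinf_L2 Ypot_L2 finite_Gtrg)
  ultimately show ?thesis
    by blast
qed

lemma Yobs_decomposition:
  assumes E: "finite E"
  obtains a d h Z
  where "\<And>t w. t \<in> {1..T} \<Longrightarrow> w \<in> space M \<Longrightarrow> Yobs S Q Yinf Ypot t w
      = (\<Sum>p\<in>Gtrg SS \<times> {0..K}. CATT M S Q Yinf Ypot (fst p) (snd p) * Rgl S Q (fst p) (snd p) t w)
        + a w + d (S w) t + h (Q w) t + Z t w"
    and "unit_effect M a" and "panel_L2 Z" and "orth_design E Z"
proof -
  obtain k d0 h0 where Yinf_mean: "\<And>s q t. s \<in> SS \<Longrightarrow> q \<in> {0, 1} \<Longrightarrow> t \<in> {1..T} \<Longrightarrow>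
      cond_mean M (cell s q) (Yinf t) = k s q + d0 s t + h0 q t"
    using Yinf_cell_means_additive by blast
  define F where "F s q t = k s q + d0 s t + h0 q t + att_cell s q t" for s q t
  define Z0 where "Z0 t w = Yobs S Q Yinf Ypot t w - F (S w) (Q w) t" for t w
  have Z0: "panel_L2 Z0"
    unfolding Z0_def[abs_def] by (intro panel_L2_diff panel_L2_Yobs panel_L2_cell_fun)
  have "(\<integral>w. indicator (cell s q) w * Z0 t w \<partial>M) = 0"
    if s: "s \<in> SS" and q: "q \<in> {0, 1}" and t: "t \<in> {1..T}" for s q t
  proof -
    have "(\<integral>w. indicator (cell s q) w * Z0 t w \<partial>M)
        = (\<integral>w. indicator (cell s q) w * Yobs S Q Yinf Ypot t w \<partial>M) - measure M (cell s q) * F s q t"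
      unfolding Z0_def by (rule integral_cell_diff_cell_fun[OF integrable_panel_L2[OF panel_L2_Yobs t]])
    also have "(\<integral>w. indicator (cell s q) w * Yobs S Q Yinf Ypot t w \<partial>M)
        = measure M (cell s q) * cond_mean M (cell s q) (Yobs S Q Yinf Ypot t)"
      using cells_pos[OF s q] by (simp add: cond_mean_def)
    also have "cond_mean M (cell s q) (Yobs S Q Yinf Ypot t) = F s q t"
      using Yobs_cell_mean[OF s q t] Yinf_mean[OF s q t] by (simp add: F_def)
    finally show ?thesis
      by simp
  qed
  then have "orth_design E (demean Z0)"
    by (rule orth_design_demean[OF E Z0])
  moreover have "unit_effect M (\<lambda>w. k (S w) (Q w) + time_mean Z0 w)"
    by (intro unit_effect_add unit_effect_cell_fun unit_effect_time_mean Z0)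
  moreover have "Yobs S Q Yinf Ypot t w
      = (\<Sum>p\<in>Gtrg SS \<times> {0..K}. CATT M S Q Yinf Ypot (fst p) (snd p) * Rgl S Q (fst p) (snd p) t w)
        + (k (S w) (Q w) + time_mean Z0 w) + d0 (S w) t + h0 (Q w) t + demean Z0 t w" for t w
    by (simp add: sum_CATT_Rgl demean_def Z0_def F_def)
  ultimately show thesis
    using panel_L2_demean[OF Z0] by (intro that[of "\<lambda>w. k (S w) (Q w) + time_mean Z0 w" d0 h0 "demean Z0"])
qed

end

theorem mainTheorem3:
  fixes M :: "'a measure" and T L K :: nat and SS :: "enat set"
    and S :: "'a \<Rightarrow> enat" and Q :: "'a \<Rightarrow> nat"
    and Yinf :: "nat \<Rightarrow> 'a \<Rightarrow> real" and Ypot :: "nat \<Rightarrow> nat \<Rightarrow> 'a \<Rightarrow> real"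
  assumes prob: "prob_space M"
    and SS_sub: "SS \<subseteq> enat ` {2..T} \<union> {\<infinity>}"
    and S_meas: "S \<in> M \<rightarrow>\<^sub>M count_space UNIV" and S_val: "\<forall>w\<in>space M. S w \<in> SS"
    and Q_meas: "Q \<in> M \<rightarrow>\<^sub>M count_space UNIV" and Q_val: "\<forall>w\<in>space M. Q w \<in> {0, 1}"
    and cells_pos: "\<forall>s\<in>SS. \<forall>q\<in>{0, 1}. measure M {w \<in> space M. S w = s \<and> Q w = q} > 0"
    and mom_inf: "\<forall>t\<in>{1..T}. Yinf t \<in> borel_measurable M \<and> integrable M (\<lambda>w. (Yinf t w)\<^sup>2)"
    and mom_pot: "\<forall>g\<in>Gtrg SS. \<forall>t\<in>{1..T}.
                    Ypot g t \<in> borel_measurable M \<and> integrable M (\<lambda>w. (Ypot g t w)\<^sup>2)"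
    and window: "\<forall>g\<in>Gtrg SS. \<forall>t\<in>{1..T}. - int L \<le> int t - int g \<and> int t - int g \<le> int K"
    and gram: "nonsingular_on (event_window L K) (demeaned_gram M T S Q)"
    and no_antic: "\<forall>g\<in>Gtrg SS. \<forall>t. 1 \<le> t \<and> t < g \<longrightarrow> (AE w in M. Ypot g t w = Yinf t w)"
    and ddd_pct: "\<forall>g\<in>Gtrg SS. \<forall>gc\<in>SS. \<forall>t\<in>{2..T}. enat g < gc \<and> enat t \<le> gc \<longrightarrow>
        Delta M S Q Yinf t (enat g) 1 - Delta M S Q Yinf t (enat g) 0
          = Delta M S Q Yinf t gc 1 - Delta M S Q Yinf t gc 0"
  shows "\<forall>j\<in>event_window L K.
           pop_coef M T S Q (event_window L K) (Yobs S Q Yinf Ypot) j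
             = (\<Sum>g\<in>Gtrg SS. \<Sum>l\<in>{0..K}.
                  omega_w M T S Q (event_window L K) j g l * CATT M S Q Yinf Ypot g l)"
proof -
  have "finite SS"
    using SS_sub by (rule finite_subset) simp
  then have panel: "ddd_panel M SS S Q"
    using prob S_meas S_val Q_meas Q_val by (intro ddd_panel.intro ddd_panel_axioms.intro) auto
  interpret ddd_model M T SS S Q L K Yinf Ypot
    using SS_sub cells_pos mom_inf mom_pot window gram no_antic ddd_pct
    by (intro ddd_model.intro[OF panel] ddd_model_axioms.intro)
      (auto simp: ddd_panel.cell_def[OF panel] ddd_panel.panel_L2_def[OF panel] unit_effect_def)
  let ?E = "event_window L K" and ?Y = "Yobs S Q Yinf Ypot"
  show ?thesis
  proof
    fix j
    assume j: "j \<in> ?E"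
    obtain a d h Z
      where "\<And>t w. t \<in> {1..T} \<Longrightarrow> w \<in> space M \<Longrightarrow> ?Y t w
        = (\<Sum>p\<in>Gtrg SS \<times> {0..K}. CATT M S Q Yinf Ypot (fst p) (snd p) * Rgl S Q (fst p) (snd p) t w)
          + a w + d (S w) t + h (Q w) t + Z t w"
        and "unit_effect M a" "panel_L2 Z" "orth_design ?E Z"
      by (rule Yobs_decomposition[OF finite_event_window]) blast
    then have "pop_coef M T S Q ?E ?Y j
        = (\<Sum>p\<in>Gtrg SS \<times> {0..K}.
            CATT M S Q Yinf Ypot (fst p) (snd p) * pop_coef M T S Q ?E (Rgl S Q (fst p) (snd p)) j)"
      using finite_Gtrg by (intro pop_coef_lincomb[OF finite_event_window gram _ panel_L2_Rgl _ _ _ _ j]) auto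
    then show "pop_coef M T S Q ?E ?Y j
        = (\<Sum>g\<in>Gtrg SS. \<Sum>l\<in>{0..K}. omega_w M T S Q ?E j g l * CATT M S Q Yinf Ypot g l)"
      by (simp add: omega_w_def sum.cartesian_product mult.commute split_def)
  qed
qed

end
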